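(* Let $\bm{\mu}\in X^{\mathcal{L}(\mathcal{T})}$. For every node $s\in S$: if $a_{s_0}(\bm{\mu})=$'win' then $d_s(\bm{\mu})>0\iff V_s(\bm{\mu})>\theta$; if $a_{s_0}(\bm{\mu})=$'lose' then $d_s(\bm{\mu})>0\iff V_s(\bm{\mu})<\theta$.
   Context: $\mathcal{T}$ is a finite rooted tree with node set $S$, root $s_0$, children $\mathcal{C}(s)$, leaves $\mathcal{L}(\mathcal{T})$; internal labels $L(s)\in\{\text{MAX},\text{MIN}\}$. $X\subseteq\mathbb{R}$ mean-parameter set of a one-parameter exponential family; $d(x,y)$ KL divergence between members with means $x,y$ (nonnegative, zero iff $x=y$); threshold $\theta\in X$. $V_s(\bm{\mu})=\mu_s$ at leaves, max/min of children's values at MAX/MIN nodes; $a_s(\bm{\mu})=$'win' iff $V_s(\bm{\mu})\ge\theta$. Define $d_s(\bm{\mu})$ bottom-up: let $a^*=a_{s_0}(\bm{\mu})$, $P=$MAX, $Q=$MIN if $a^*=$'win' and $P=$MIN, $Q=$MAX if 'lose'. Leaf $s$: $d_s=d(\mu_s,\theta)$ if ($a^*=$'win', $\mu_s\ge\theta$) or ($a^*=$'lose', $\mu_s<\theta$), else $0$. $L(s)=P$: $d_s=\max_{c\in\mathcal{C}(s)}d_c$. $L(s)=Q$: $d_s=(\sum_{c}1/d_c)^{-1}$ if $d_c>0$ for all $c\in\mathcal{C}(s)$, and $d_s=0$ otherwise. *)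

theory Defs
  imports Complex_Main
begin

datatype player = PMax | PMin

datatype 'l gtree = Leaf 'l | Inner player "'l gtree list"

fun wf_tree :: "'l gtree \<Rightarrow> bool" where
  "wf_tree (Leaf l) = True"
| "wf_tree (Inner p cs) = (cs \<noteq> [] \<and> (\<forall>c\<in>set cs. wf_tree c))"

text \<open>The node set of a tree (each node identified with the subtree rooted at it).\<close>
fun nodes :: "'l gtree \<Rightarrow> 'l gtree set" where
  "nodes (Leaf l) = {Leaf l}"
| "nodes (Inner p cs) = insert (Inner p cs) (\<Union>c\<in>set cs. nodes c)"

fun leaves :: "'l gtree \<Rightarrow> 'l set" where
  "leaves (Leaf l) = {l}"
| "leaves (Inner p cs) = (\<Union>c\<in>set cs. leaves c)"

fun val :: "('l \<Rightarrow> real) \<Rightarrow> 'l gtree \<Rightarrow> real" where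
  "val \<mu> (Leaf l) = \<mu> l"
| "val \<mu> (Inner PMax cs) = Max (set (map (val \<mu>) cs))"
| "val \<mu> (Inner PMin cs) = Min (set (map (val \<mu>) cs))"

definition wins :: "('l \<Rightarrow> real) \<Rightarrow> real \<Rightarrow> 'l gtree \<Rightarrow> bool" where
  "wins \<mu> \<theta> s \<longleftrightarrow> val \<mu> s \<ge> \<theta>"

text \<open>d_s(mu), computed bottom-up; the parameter w is the root answer a* (True = 'win').
  P = MAX, Q = MIN if w, and P = MIN, Q = MAX otherwise.\<close>
fun dval :: "(real \<Rightarrow> real \<Rightarrow> real) \<Rightarrow> real \<Rightarrow> bool \<Rightarrow> ('l \<Rightarrow> real) \<Rightarrow> 'l gtree \<Rightarrow> real" where
  "dval d \<theta> w \<mu> (Leaf l) =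
     (if (w \<and> \<mu> l \<ge> \<theta>) \<or> (\<not> w \<and> \<mu> l < \<theta>) then d (\<mu> l) \<theta> else 0)"
| "dval d \<theta> w \<mu> (Inner p cs) =
     (if (p = PMax) = w then Max (set (map (dval d \<theta> w \<mu>) cs))
      else if (\<forall>c\<in>set cs. dval d \<theta> w \<mu> c > 0)
           then inverse (sum_list (map (\<lambda>c. 1 / dval d \<theta> w \<mu> c) cs))
           else 0)"

definition dnode :: "(real \<Rightarrow> real \<Rightarrow> real) \<Rightarrow> real \<Rightarrow> ('l \<Rightarrow> real) \<Rightarrow> 'l gtree \<Rightarrow> 'l gtree \<Rightarrow> real" where
  "dnode d \<theta> \<mu> s0 s = dval d \<theta> (wins \<mu> \<theta> s0) \<mu> s"

end

theory Submission
  imports Defs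
begin

text \<open>The claim holds for an arbitrary answer \<open>w\<close>, not only the root's. At a leaf, \<open>d\<close> is
  positive exactly when the mean is strictly beyond, since \<open>d(x, \<theta>) = 0\<close> iff \<open>x = \<theta>\<close>. At a
  \<open>P\<close>-node both positivity of \<open>d\<close> (a maximum) and the value being strictly beyond hold iff
  they hold for some child; at a \<open>Q\<close>-node (a harmonic combination, resp. the
  opposite extremum) they hold iff they hold for every child.\<close>

definition strictly_beyond :: "bool \<Rightarrow> real \<Rightarrow> real \<Rightarrow> bool" where
  "strictly_beyond w \<theta> v \<longleftrightarrow> (if w then \<theta> < v else v < \<theta>)"

lemma wf_tree_nodes: "s \<in> nodes t \<Longrightarrow> wf_tree t \<Longrightarrow> wf_tree s"
  by (induction t) auto

lemma leaves_nodes_subset: "s \<in> nodes t \<Longrightarrow> leaves s \<subseteq> leaves t"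
  by (induction t) auto

lemma strictly_beyond_val_Inner_iff:
  assumes "cs \<noteq> []"
  shows "strictly_beyond w \<theta> (val \<mu> (Inner p cs)) \<longleftrightarrow>
    (if (p = PMax) = w then \<exists>c\<in>set cs. strictly_beyond w \<theta> (val \<mu> c)
     else \<forall>c\<in>set cs. strictly_beyond w \<theta> (val \<mu> c))"
proof -
  have "finite (val \<mu> ` set cs)" "val \<mu> ` set cs \<noteq> {}"
    using assms by auto
  note extremum_iffs = Max_gr_iff[OF this] Max_less_iff[OF this]
    Min_gr_iff[OF this] Min_less_iff[OF this]
  show ?thesis
    by (cases p; cases w) (auto simp: strictly_beyond_def extremum_iffs)
qed

lemma dval_Inner_pos_iff:
  assumes "cs \<noteq> []"
  shows "0 < dval d \<theta> w \<mu> (Inner p cs) \<longleftrightarrow>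
    (if (p = PMax) = w then \<exists>c\<in>set cs. 0 < dval d \<theta> w \<mu> c
     else \<forall>c\<in>set cs. 0 < dval d \<theta> w \<mu> c)"
proof -
  let ?D = "dval d \<theta> w \<mu>"
  have "finite (set (map ?D cs))" "set (map ?D cs) \<noteq> {}"
    using assms by auto
  then have max_pos: "0 < Max (set (map ?D cs)) \<longleftrightarrow> (\<exists>c\<in>set cs. 0 < ?D c)"
    by (simp add: Max_gr_iff)
  have harmonic_pos: "0 < inverse (sum_list (map (\<lambda>c. 1 / ?D c) cs))"
    if "\<forall>c\<in>set cs. 0 < ?D c"
    using sum_list_strict_mono[OF assms, of "\<lambda>_. 0" "\<lambda>c. 1 / ?D c"] that by simp
  show ?thesis
    using max_pos harmonic_pos by auto
qed

lemma dval_Leaf_pos_iff: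
  assumes d_nonneg: "\<And>x y. x \<in> X \<Longrightarrow> y \<in> X \<Longrightarrow> d x y \<ge> 0"
    and d_zero: "\<And>x y. x \<in> X \<Longrightarrow> y \<in> X \<Longrightarrow> d x y = 0 \<longleftrightarrow> x = y"
    and "\<theta> \<in> X" "\<mu> l \<in> X"
  shows "0 < dval d \<theta> w \<mu> (Leaf l) \<longleftrightarrow> strictly_beyond w \<theta> (\<mu> l)"
proof -
  have "0 < d (\<mu> l) \<theta> \<longleftrightarrow> \<mu> l \<noteq> \<theta>"
    using d_nonneg[of "\<mu> l" \<theta>] d_zero[of "\<mu> l" \<theta>] assms(3,4) by auto
  then show ?thesis
    by (auto simp: strictly_beyond_def)
qed

lemma dval_pos_iff_strictly_beyond:
  assumes d_nonneg: "\<And>x y. x \<in> X \<Longrightarrow> y \<in> X \<Longrightarrow> d x y \<ge> 0"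
    and d_zero: "\<And>x y. x \<in> X \<Longrightarrow> y \<in> X \<Longrightarrow> d x y = 0 \<longleftrightarrow> x = y"
    and theta: "\<theta> \<in> X"
  shows "wf_tree t \<Longrightarrow> \<forall>l\<in>leaves t. \<mu> l \<in> X \<Longrightarrow>
    0 < dval d \<theta> w \<mu> t \<longleftrightarrow> strictly_beyond w \<theta> (val \<mu> t)"
proof (induction t)
  case (Leaf l)
  then have "\<mu> l \<in> X" by simp
  then show ?case
    by (simp add: dval_Leaf_pos_iff[OF d_nonneg d_zero theta] del: dval.simps)
next
  case (Inner p cs)
  then have "cs \<noteq> []" by simp
  with Inner show ?case
    by (simp add: dval_Inner_pos_iff strictly_beyond_val_Inner_iff del: dval.simps)
qed

theorem proposition8:
  fixes T :: "'l gtree" and \<mu> :: "'l \<Rightarrow> real" and X :: "real set"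
    and d :: "real \<Rightarrow> real \<Rightarrow> real" and \<theta> :: real
  assumes wf: "wf_tree T"
    and d_nonneg: "\<And>x y. x \<in> X \<Longrightarrow> y \<in> X \<Longrightarrow> d x y \<ge> 0"
    and d_zero: "\<And>x y. x \<in> X \<Longrightarrow> y \<in> X \<Longrightarrow> d x y = 0 \<longleftrightarrow> x = y"
    and theta: "\<theta> \<in> X"
    and mu: "\<And>l. l \<in> leaves T \<Longrightarrow> \<mu> l \<in> X"
  shows "\<forall>s\<in>nodes T.
           (wins \<mu> \<theta> T \<longrightarrow> (dnode d \<theta> \<mu> T s > 0 \<longleftrightarrow> val \<mu> s > \<theta>)) \<and>
           (\<not> wins \<mu> \<theta> T \<longrightarrow> (dnode d \<theta> \<mu> T s > 0 \<longleftrightarrow> val \<mu> s < \<theta>))"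
proof
  fix s assume s: "s \<in> nodes T"
  have "wf_tree s" "\<forall>l\<in>leaves s. \<mu> l \<in> X"
    using wf_tree_nodes[OF s wf] leaves_nodes_subset[OF s] mu by auto
  from dval_pos_iff_strictly_beyond[OF d_nonneg d_zero theta this]
  show "(wins \<mu> \<theta> T \<longrightarrow> (dnode d \<theta> \<mu> T s > 0 \<longleftrightarrow> val \<mu> s > \<theta>)) \<and>
      (\<not> wins \<mu> \<theta> T \<longrightarrow> (dnode d \<theta> \<mu> T s > 0 \<longleftrightarrow> val \<mu> s < \<theta>))"
    by (simp add: dnode_def strictly_beyond_def)
qed

end
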